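(* Let $m,n$ be positive integers such that $n$ reduces to $m$. Let $a$ be the smallest integer with $2^am\ge n$. Then $|\mathcal{M}_x(n)|\le|\mathcal{M}_x(2^am)|$ for all $x\in\mathbb{R}$.
   Context: For a positive integer $n$, $\mathcal{D}(n)$ is the set of positive divisors of $n$, and $\lambda(n)$ is the least prime factor of $n$ if $n\ge2$, with $\lambda(1)=1$. For positive integers $m,n$, a function $f:\mathcal{D}(n)\to\mathcal{D}(m)$ is called reducing if for all $d,d'\in\mathcal{D}(n)$: (a) $f(d)\le d$; (b) $\frac{m/f(d)}{n/d}\le\min\{1,\ \lambda(m/f(d))/\lambda(n/d)\}$; (c) if $f(d)=2^if(d')$ for some $i\in\mathbb{Z}$, then $d=2^jd'$ for some $j\in\mathbb{Z}$. We say $n$ reduces to $m$ if a reducing function $\mathcal{D}(n)\to\mathcal{D}(m)$ exists. For $x\in\mathbb{R}$, a positive divisor $d$ of $n$ is maximal with respect to $x$ if $d\le x$ and there is no other positive divisor $d'$ of $n$ with $d'\le x$ and $d\mid d'$; $\mathcal{M}_x(n)$ denotes the set of such divisors. *)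

theory Defs
  imports "HOL-Analysis.Analysis" "HOL-Computational_Algebra.Primes"
begin

definition divisors_set :: "nat \<Rightarrow> nat set" where
  "divisors_set n = {d. 0 < d \<and> d dvd n}"

definition least_prime_factor :: "nat \<Rightarrow> nat" where
  "least_prime_factor n = (if n \<ge> 2 then Min (prime_factors n) else 1)"

definition reducing :: "nat \<Rightarrow> nat \<Rightarrow> (nat \<Rightarrow> nat) \<Rightarrow> bool" where
  "reducing m n f \<longleftrightarrow>
     (\<forall>d\<in>divisors_set n. f d \<in> divisors_set m) \<and>
     (\<forall>d\<in>divisors_set n. f d \<le> d) \<and>
     (\<forall>d\<in>divisors_set n.
        (real (m div f d) / real (n div d))
          \<le> min 1 (real (least_prime_factor (m div f d)) / real (least_prime_factor (n div d)))) \<and>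
     (\<forall>d\<in>divisors_set n. \<forall>d'\<in>divisors_set n.
        (\<exists>i::int. real (f d) = 2 powi i * real (f d')) \<longrightarrow>
        (\<exists>j::int. real d = 2 powi j * real d'))"

definition reduces_to :: "nat \<Rightarrow> nat \<Rightarrow> bool" where
  "reduces_to n m \<longleftrightarrow> (\<exists>f. reducing m n f)"

definition maximal_divisors :: "real \<Rightarrow> nat \<Rightarrow> nat set" where
  "maximal_divisors x n =
     {d\<in>divisors_set n. real d \<le> x \<and>
        \<not> (\<exists>d'\<in>divisors_set n. d' \<noteq> d \<and> real d' \<le> x \<and> d dvd d')}"

end

theory Submission
  imports Defs
begin

text \<open>Each maximal divisor \<open>d\<close> of \<open>n\<close> below \<open>x\<close> is mapped to the largest divisor of the form
  \<open>2^j f(d)\<close> of \<open>2^a m\<close> below \<open>x\<close>. Condition (b) of a reducing function, applied at the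
  maximal \<open>d\<close>, shows that this divisor is again maximal; condition (c) shows that two maximal
  divisors with the same image differ by a power of \<open>2\<close>, hence one divides the other, hence
  they coincide. So the map is an injection \<open>\<M>\<^sub>x(n) \<rightarrow> \<M>\<^sub>x(2^a m)\<close>.\<close>

lemma least_prime_factor_in_prime_factors:
  assumes "k \<ge> 2"
  shows "least_prime_factor k \<in> prime_factors k"
proof -
  obtain p where "prime p" "p dvd k" using assms prime_factor_nat[of k] by auto
  then have "p \<in> prime_factors k" using assms by (simp add: in_prime_factors_iff)
  then have "Min (prime_factors k) \<in> prime_factors k" by (intro Min_in) auto
  then show ?thesis using assms unfolding least_prime_factor_def by simp
qed

lemma least_prime_factor_le:
  assumes "prime p" "p dvd k" "k > 0"
  shows "least_prime_factor k \<le> p"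
proof (cases "k \<ge> 2")
  case True
  then show ?thesis using assms by (auto simp: least_prime_factor_def in_prime_factors_iff)
next
  case False
  then show ?thesis using assms by (auto simp: least_prime_factor_def)
qed

lemma least_prime_factor_pos: "least_prime_factor k > 0"
  using least_prime_factor_in_prime_factors[of k]
  by (cases "k \<ge> 2") (auto simp: least_prime_factor_def dest: in_prime_factors_imp_prime prime_gt_0_nat)

lemma finite_divisors_set: "n > 0 \<Longrightarrow> finite (divisors_set n)"
  unfolding divisors_set_def by (rule finite_subset[of _ "{..n}"]) (auto dest: dvd_imp_le)

lemma finite_maximal_divisors: "0 < N \<Longrightarrow> finite (maximal_divisors x N)"
  using finite_divisors_set by (auto simp: maximal_divisors_def)

lemma maximal_divisors_iff:
  "t \<in> maximal_divisors x N \<longleftrightarrow>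
     t \<in> divisors_set N \<and> real t \<le> x \<and> (\<forall>p. prime p \<longrightarrow> p dvd N div t \<longrightarrow> x < real (t * p))"
proof
  assume t: "t \<in> maximal_divisors x N"
  then have t_div: "t \<in> divisors_set N" "real t \<le> x" by (auto simp: maximal_divisors_def)
  have "x < real (t * p)" if "prime p" "p dvd N div t" for p
  proof (rule ccontr)
    assume "\<not> x < real (t * p)"
    moreover have "t * p \<in> divisors_set N"
      using t_div(1) that by (auto simp: divisors_set_def prime_gt_0_nat dvd_div_iff_mult mult.commute)
    moreover have "t * p \<noteq> t"
      using t_div(1) \<open>prime p\<close> by (auto simp: divisors_set_def dest: prime_gt_1_nat)
    ultimately show False using t by (auto simp: maximal_divisors_def)
  qed
  with t_div show "t \<in> divisors_set N \<and> real t \<le> x \<and>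
      (\<forall>p. prime p \<longrightarrow> p dvd N div t \<longrightarrow> x < real (t * p))" by blast
next
  assume t: "t \<in> divisors_set N \<and> real t \<le> x \<and>
      (\<forall>p. prime p \<longrightarrow> p dvd N div t \<longrightarrow> x < real (t * p))"
  have False if "d \<in> divisors_set N" "d \<noteq> t" "real d \<le> x" "t dvd d" for d
  proof -
    obtain c where c: "d = t * c" using \<open>t dvd d\<close> by (rule dvdE)
    then have "c \<noteq> 1" "c > 0" using that by (auto simp: divisors_set_def)
    then obtain p where p: "prime p" "p dvd c" using prime_factor_nat by blast
    have "c dvd N div t"
      using that(1) t c by (auto simp: divisors_set_def dvd_div_iff_mult mult.commute)
    then have "x < real (t * p)" using t p dvd_trans by blast
    moreover have "t * p \<le> d" using c p(2) \<open>c > 0\<close> by (simp add: dvd_imp_le)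
    ultimately show False using \<open>real d \<le> x\<close> by linarith
  qed
  with t show "t \<in> maximal_divisors x N" by (auto simp: maximal_divisors_def)
qed

lemma maximal_divisors_dvd_eq:
  assumes "u \<in> maximal_divisors x N" "v \<in> maximal_divisors x N" "u dvd v"
  shows "u = v"
  using assms by (auto simp: maximal_divisors_def)

lemma greatest_two_power_multiple_le:
  fixes N e :: nat
  assumes "0 < N" "e dvd N" "0 < e" "real e \<le> x"
  obtains j where "2^j * e dvd N" "real (2^j * e) \<le> x"
    "2^Suc j * e dvd N \<Longrightarrow> x < real (2^Suc j * e)"
proof -
  define J where "J = {j. 2^j * e dvd N \<and> real (2^j * e) \<le> x}"
  have "J \<subseteq> {..<N}"
  proof
    fix j assume "j \<in> J"
    then have "2^j * e \<le> N" using assms(1) by (auto simp: J_def dest: dvd_imp_le)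
    moreover have "2^j \<le> 2^j * e" using assms(3) by simp
    ultimately show "j \<in> {..<N}" using less_exp[of j] unfolding lessThan_iff by linarith
  qed
  then have "finite J" by (rule finite_subset) simp
  moreover have "J \<noteq> {}" using assms by (auto simp: J_def intro!: exI[of _ 0])
  ultimately have "Max J \<in> J" by (rule Max_in)
  have "Suc (Max J) \<notin> J"
  proof
    assume "Suc (Max J) \<in> J"
    with \<open>finite J\<close> have "Suc (Max J) \<le> Max J" by (rule Max_ge)
    then show False by simp
  qed
  with \<open>Max J \<in> J\<close> show ?thesis by (intro that[of "Max J"]) (auto simp: J_def not_le)
qed

lemma two_power_mult_eq_odd:
  fixes k q :: nat
  assumes "2^A * k = 2^j * q" "odd q"
  shows "A \<le> j" "q dvd k"
proof -
  show "A \<le> j"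
  proof (rule ccontr)
    assume "\<not> A \<le> j"
    then have "(2::nat)^A = 2^j * 2^(A - j)" by (simp flip: power_add)
    then have "q = 2^(A - j) * k" using assms(1) by (simp add: mult.assoc)
    then show False using \<open>\<not> A \<le> j\<close> assms(2) by simp
  qed
  have "q dvd 2^A * k" using assms(1) by simp
  moreover have "coprime q (2^A)" using assms(2) by simp
  ultimately show "q dvd k" using coprime_dvd_mult_right_iff by blast
qed

lemma real_eq_two_powi_mult_dvd:
  fixes u v :: nat
  assumes "real u = 2 powi i * real v"
  shows "v dvd u \<or> u dvd v"
proof (cases "i \<ge> 0")
  case True
  then have "(2::real) powi i = 2 ^ nat i" by (metis nat_0_le power_int_of_nat)
  then have "real u = real (2 ^ nat i * v)" using assms by simp
  then show ?thesis by (metis dvd_triv_right of_nat_eq_iff)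
next
  case False
  then have "(2::real) powi (- i) = 2 ^ nat (- i)" by (metis nat_0_le neg_0_le_iff_le nle_le power_int_of_nat)
  moreover have "real v = 2 powi (- i) * real u" using assms by (simp add: power_int_minus field_simps)
  ultimately have "real v = real (2 ^ nat (- i) * u)" by simp
  then show ?thesis by (metis dvd_triv_right of_nat_eq_iff)
qed

lemma reducing_quotient_bounds:
  assumes "reducing m n f" "d \<in> divisors_set n" "0 < n"
  shows "m div f d \<le> n div d"
    and "m div f d * least_prime_factor (n div d) \<le> least_prime_factor (m div f d) * (n div d)"
proof -
  define k r where "k = m div f d" and "r = n div d"
  have "r > 0" using assms(2,3) by (auto simp: r_def divisors_set_def dest: dvd_div_eq_0_iff)
  have b: "real k / real r \<le> min 1 (real (least_prime_factor k) / real (least_prime_factor r))"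
    using assms(1,2) unfolding reducing_def k_def r_def by blast
  then show "m div f d \<le> n div d" using \<open>r > 0\<close> by (simp add: k_def r_def divide_le_eq_1)
  from b have "real k * real (least_prime_factor r) \<le> real (least_prime_factor k) * real r"
    using \<open>r > 0\<close> least_prime_factor_pos[of r] by (simp add: divide_simps)
  then show "m div f d * least_prime_factor (n div d) \<le> least_prime_factor (m div f d) * (n div d)"
    unfolding k_def r_def by (simp flip: of_nat_mult)
qed

lemma reducing_imp_le:
  assumes "reducing m n f" "0 < m" "0 < n"
  shows "m \<le> n"
proof -
  have n: "n \<in> divisors_set n" using assms(3) by (simp add: divisors_set_def)
  then have "f n dvd m" "f n \<le> n" using assms(1) by (auto simp: reducing_def divisors_set_def)
  moreover have "m div f n \<le> 1" using reducing_quotient_bounds(1)[OF assms(1) n assms(3)] assms(3) by simp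
  ultimately show ?thesis by (metis dvd_mult_div_cancel le_trans mult.right_neutral mult_le_mono2)
qed

text \<open>Condition (b) at a maximal divisor \<open>d\<close> of \<open>n\<close>: the prime \<open>\<lambda>(n/d)\<close> pushes \<open>d\<close> above
  \<open>x\<close>, and (b) converts this into a bound in terms of any prime factor of \<open>m/f(d)\<close>.\<close>

lemma reducing_maximal_divisor_bound:
  assumes "reducing m n f" "0 < n" "n \<le> 2^A * m" "d \<in> maximal_divisors x n"
    and "prime p" "p dvd m div f d"
  shows "x < real (2^A * f d * p)"
proof -
  define k r where "k = m div f d" and "r = n div d"
  have d: "d \<in> divisors_set n" using assms(4) by (simp add: maximal_divisors_iff)
  have "f d \<in> divisors_set m" using assms(1) d by (simp add: reducing_def)
  moreover have "m > 0" using assms(2,3) by (auto intro: ccontr)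
  ultimately have mk: "m = f d * k" and "k > 0" by (auto simp: k_def divisors_set_def)
  have "k \<noteq> 1" using assms(5,6) by (auto simp: k_def)
  with \<open>k > 0\<close> have "r \<ge> 2" using reducing_quotient_bounds(1)[OF assms(1) d assms(2)] by (simp add: k_def r_def)
  then have "x < real (d * least_prime_factor r)"
    using assms(4) least_prime_factor_in_prime_factors[of r]
    by (auto simp: maximal_divisors_iff r_def dest: in_prime_factors_imp_prime)
  have "d * least_prime_factor r * k \<le> d * (least_prime_factor k * r)"
    using mult_le_mono2[OF reducing_quotient_bounds(2)[OF assms(1) d assms(2)], of d]
    by (simp add: k_def r_def ac_simps)
  also have "\<dots> = least_prime_factor k * n"
    using d by (simp add: r_def divisors_set_def mult.left_commute)
  also have "\<dots> \<le> least_prime_factor k * 2^A * f d * k" using assms(3) mk by (simp add: ac_simps)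
  finally have "d * least_prime_factor r \<le> least_prime_factor k * 2^A * f d" using \<open>k > 0\<close> by simp
  also have "\<dots> \<le> p * 2^A * f d"
    using least_prime_factor_le[OF assms(5)] assms(6) \<open>k > 0\<close> by (simp add: k_def)
  finally have "d * least_prime_factor r \<le> 2^A * f d * p" by (simp add: ac_simps)
  then have "real (d * least_prime_factor r) \<le> real (2^A * f d * p)" by (rule of_nat_mono)
  with \<open>x < real (d * least_prime_factor r)\<close> show ?thesis by linarith
qed

lemma reducing_two_power_mult_eq_imp_dvd:
  assumes "reducing m n f" "d \<in> divisors_set n" "d' \<in> divisors_set n" "2^j * f d = 2^j' * f d'"
  shows "d dvd d' \<or> d' dvd d"
proof -
  have "(2::real)^j * real (f d) = 2^j' * real (f d')" using arg_cong[OF assms(4), of real] by simp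
  then have "real (f d) = 2 powi (int j' - int j) * real (f d')"
    by (simp add: power_int_diff field_simps)
  then obtain i :: int where "real d = 2 powi i * real d'"
    using assms(1-3) unfolding reducing_def by blast
  then show ?thesis using real_eq_two_powi_mult_dvd by blast
qed

text \<open>Take \<open>j\<close> maximal. A prime step from \<open>2^j f(d)\<close> inside \<open>2^A m\<close> either doubles it,
  which is excluded by the choice of \<open>j\<close>, or multiplies it by an odd prime dividing \<open>m/f(d)\<close>,
  which overshoots \<open>x\<close> by the previous lemma.\<close>

lemma reducing_maximal_divisor_lift:
  assumes "reducing m n f" "0 < n" "n \<le> 2^A * m" "d \<in> maximal_divisors x n"
  obtains j where "2^j * f d \<in> maximal_divisors x (2^A * m)"
proof -
  define N where "N = 2^A * m"
  have d: "d \<in> divisors_set n" "real d \<le> x" using assms(4) by (auto simp: maximal_divisors_iff)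
  have fd: "0 < f d" "f d dvd m" "f d \<le> d" using assms(1) d(1) by (auto simp: reducing_def divisors_set_def)
  have "m > 0" using assms(2,3) by (auto intro: ccontr)
  then have "0 < N" by (simp add: N_def)
  moreover have "f d dvd N" using fd(2) by (simp add: N_def)
  moreover have "real (f d) \<le> x" using fd(3) d(2) by linarith
  ultimately obtain j where j: "2^j * f d dvd N" "real (2^j * f d) \<le> x"
    "2^Suc j * f d dvd N \<Longrightarrow> x < real (2^Suc j * f d)"
    using fd(1) greatest_two_power_multiple_le by metis
  define t where "t = 2^j * f d"
  have "t > 0" using fd(1) by (simp add: t_def)
  have "x < real (t * p)" if p: "prime p" "p dvd N div t" for p
  proof (cases "even (N div t)")
    case True
    then have "2 * t dvd N" using j(1) \<open>t > 0\<close> by (simp add: t_def dvd_div_iff_mult mult.commute)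
    then have "x < real (2 * t)" using j(3) by (simp add: t_def mult.assoc)
    moreover have "2 * t \<le> t * p" using prime_ge_2_nat[OF p(1)] by simp
    ultimately show ?thesis by (meson less_le_trans of_nat_le_iff)
  next
    case False
    obtain k where mk: "m = f d * k" using fd(2) by (rule dvdE)
    have "N = t * (N div t)" using j(1) by (simp add: t_def)
    then have "f d * (2^A * k) = f d * (2^j * (N div t))"
      using mk by (simp add: N_def t_def ac_simps)
    then have "2^A * k = 2^j * (N div t)" using fd(1) by simp
    from two_power_mult_eq_odd[OF this False] have "A \<le> j" "N div t dvd k" by auto
    then have "p dvd m div f d" using p(2) mk fd(1) by (auto intro: dvd_trans)
    then have "x < real (2^A * f d * p)" using reducing_maximal_divisor_bound[OF assms p(1)] by blast
    also have "\<dots> \<le> real (t * p)"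
      unfolding of_nat_le_iff t_def using \<open>A \<le> j\<close> by (intro mult_le_mono1 power_increasing) auto
    finally show ?thesis .
  qed
  then have "t \<in> maximal_divisors x N"
    using j(1,2) \<open>t > 0\<close> by (simp add: maximal_divisors_iff divisors_set_def t_def)
  then show ?thesis using that by (simp add: N_def t_def)
qed

lemma reducing_card_maximal_divisors_le:
  assumes "reducing m n f" "0 < n" "n \<le> 2^A * m"
  shows "card (maximal_divisors x n) \<le> card (maximal_divisors x (2^A * m))"
proof -
  have "\<forall>d \<in> maximal_divisors x n. \<exists>j. 2^j * f d \<in> maximal_divisors x (2^A * m)"
    using reducing_maximal_divisor_lift[OF assms] by metis
  then obtain J where J: "\<And>d. d \<in> maximal_divisors x n \<Longrightarrow> 2^J d * f d \<in> maximal_divisors x (2^A * m)"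
    by metis
  define g where "g d = 2^J d * f d" for d
  have "inj_on g (maximal_divisors x n)"
  proof (rule inj_onI)
    fix d d' assume d: "d \<in> maximal_divisors x n" and d': "d' \<in> maximal_divisors x n" and "g d = g d'"
    then have "d dvd d' \<or> d' dvd d"
      using reducing_two_power_mult_eq_imp_dvd[OF assms(1)] by (auto simp: g_def maximal_divisors_def)
    then show "d = d'" using maximal_divisors_dvd_eq d d' by metis
  qed
  moreover have "g ` maximal_divisors x n \<subseteq> maximal_divisors x (2^A * m)" using J by (auto simp: g_def)
  moreover have "0 < 2^A * m" using assms(2,3) by (auto intro: ccontr)
  ultimately show ?thesis using card_inj_on_le finite_maximal_divisors by metis
qed

theorem theorem3p5:
  fixes m n :: nat and a :: int
  assumes "0 < m" and "0 < n"
    and "reduces_to n m"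
    and "2 powi a * real m \<ge> real n"
    and "\<forall>b::int. 2 powi b * real m \<ge> real n \<longrightarrow> a \<le> b"
  shows "\<forall>x::real. card (maximal_divisors x n) \<le> card (maximal_divisors x (2 ^ nat a * m))"
proof
  fix x :: real
  obtain f where f: "reducing m n f" using assms(3) by (auto simp: reduces_to_def)
  then have "m \<le> n" using assms(1,2) by (rule reducing_imp_le)
  have "a \<ge> 0"
  proof (rule ccontr)
    assume "\<not> a \<ge> 0"
    then have "(2::real) powi a < 1" using power_int_strict_increasing[of a 0 "2::real"] by simp
    then have "2 powi a * real m < real m" using assms(1) by simp
    then show False using assms(4) \<open>m \<le> n\<close> by linarith
  qed
  then have "real n \<le> real (2 ^ nat a * m)" using assms(4) by (simp add: power_int_def)
  then have "n \<le> 2 ^ nat a * m" by (simp only: of_nat_le_iff)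
  with f assms(2) show "card (maximal_divisors x n) \<le> card (maximal_divisors x (2 ^ nat a * m))"
    by (rule reducing_card_maximal_divisors_le)
qed

end
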